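(* Let $\Sigma$ be a finite alphabet, $m,n$ positive integers with $m\le n$, $u,v\in\Sigma^\star$, and $r\in R_{m,n}(u)\cap R_{m,n}(v)$. Let $i_1,i_2\in[1,|u|]$, $j_1,j_2\in[1,|v|]$ with $\operatorname{ord}(r(u),i_1)\ne\operatorname{ord}(r(v),j_1)$. Then Samson has a winning strategy in the game $\mathrm{FO}^2_{m,n}((u,i_1,i_2),(v,j_1,j_2))$. Moreover, Samson has such a winning strategy whose first move is on $u$ if either $r$ ends with $\triangleright$, $r(u)\le i_1$ and $r(v)\ge j_1$, or $r$ ends with $\triangleleft$, $r(u)\ge i_1$ and $r(v)\le j_1$; and he has such a winning strategy whose first move is on $v$ if either $r$ ends with $\triangleright$, $r(u)\ge i_1$ and $r(v)\le j_1$, or $r$ ends with $\triangleleft$, $r(u)\le i_1$ and $r(v)\ge j_1$.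
   Context: Game $\mathrm{FO}^2_{m,n}((u,i_1,i_2),(v,j_1,j_2))$: pebble pair $x$ starts on $i_1$ in $u$ and $j_1$ in $v$, pair $y$ on $i_2$ in $u$ and $j_2$ in $v$. In each of $n$ rounds Samson picks $z\in\{x,y\}$ and places a $z$-pebble on a position of one of the words; Delilah places the mate on a position of the other word. Samson may change the word he plays on at most $m-1$ times. Samson wins if initially or after some round the map $x^u\mapsto x^v$, $y^u\mapsto y^v$ is not a partial isomorphism (pebbled letters differ or $\operatorname{ord}(x^u,y^u)\ne\operatorname{ord}(x^v,y^v)$); otherwise Delilah wins. Boundary positions: $\triangleright_a(w)=\min\{i:w_i=a\}$, $\triangleleft_a(w)=\max\{i:w_i=a\}$, $\triangleright_a(w,q)=\min\{i\in[q+1,|w|]:w_i=a\}$, $\triangleleft_a(w,q)=\max\{i\in[1,q-1]:w_i=a\}$ (undefined if empty); $\triangleright,\triangleleft$ are directions. An $n$-ranker is a sequence $r=(p_1,\dots,p_n)$ of boundary positions with $r(w)=p_1(w)$ if $n=1$, undefined if $(p_1,\dots,p_{n-1})(w)$ is undefined, else $p_n(w,(p_1,\dots,p_{n-1})(w))$; it ends with the direction of $p_n$. An $(m,n)$-ranker is an $n$-ranker whose directions form exactly $m$ maximal blocks of equal direction; $R_{m,n}(w)$ is the set of $(m,n)$-rankers defined over $w$. $\operatorname{ord}(i,j)\in\{<,=,>\}$ is the order type. *)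

theory Defs
  imports Main
begin

(* Words are lists over a finite alphabet 'a; positions are 1-based: the letter
   at position i of w is w ! (i - 1), for i in {1..length w}. *)

definition letter :: "'a list \<Rightarrow> nat \<Rightarrow> 'a" where
  "letter w i = w ! (i - 1)"

(* directions: Rt = \<triangleright> (next occurrence to the right), Lt = \<triangleleft> *)
datatype dir = Rt | Lt

type_synonym 'a bpos = "dir \<times> 'a"

definition bpos_first :: "'a bpos \<Rightarrow> 'a list \<Rightarrow> nat option" where
  "bpos_first p w = (case p of
      (Rt, a) \<Rightarrow> (if {i \<in> {1..length w}. letter w i = a} = {} then None
                   else Some (Min {i \<in> {1..length w}. letter w i = a}))
    | (Lt, a) \<Rightarrow> (if {i \<in> {1..length w}. letter w i = a} = {} then None
                   else Some (Max {i \<in> {1..length w}. letter w i = a})))"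

definition bpos_step :: "'a bpos \<Rightarrow> 'a list \<Rightarrow> nat \<Rightarrow> nat option" where
  "bpos_step p w q = (case p of
      (Rt, a) \<Rightarrow> (if {i \<in> {q+1..length w}. letter w i = a} = {} then None
                   else Some (Min {i \<in> {q+1..length w}. letter w i = a}))
    | (Lt, a) \<Rightarrow> (if {i \<in> {1..q-1}. letter w i = a} = {} then None
                   else Some (Max {i \<in> {1..q-1}. letter w i = a})))"

fun ranker_from :: "'a bpos list \<Rightarrow> 'a list \<Rightarrow> nat \<Rightarrow> nat option" where
  "ranker_from [] w q = Some q"
| "ranker_from (p # ps) w q =
     (case bpos_step p w q of None \<Rightarrow> None | Some q' \<Rightarrow> ranker_from ps w q')"

fun ranker_eval :: "'a bpos list \<Rightarrow> 'a list \<Rightarrow> nat option" where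
  "ranker_eval [] w = None"
| "ranker_eval (p # ps) w =
     (case bpos_first p w of None \<Rightarrow> None | Some q \<Rightarrow> ranker_from ps w q)"

definition num_blocks :: "'a bpos list \<Rightarrow> nat" where
  "num_blocks r = (if r = [] then 0
     else Suc (card {i. Suc i < length r \<and> fst (r ! i) \<noteq> fst (r ! Suc i)}))"

definition is_mn_ranker :: "nat \<Rightarrow> nat \<Rightarrow> 'a bpos list \<Rightarrow> bool" where
  "is_mn_ranker m n r \<longleftrightarrow> length r = n \<and> num_blocks r = m"

definition R_mn :: "nat \<Rightarrow> nat \<Rightarrow> 'a list \<Rightarrow> 'a bpos list set" where
  "R_mn m n w = {r. is_mn_ranker m n r \<and> ranker_eval r w \<noteq> None}"

definition ends_with :: "'a bpos list \<Rightarrow> dir" where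
  "ends_with r = fst (last r)"

datatype ordt = OLess | OEq | OGreater

definition ord_type :: "nat \<Rightarrow> nat \<Rightarrow> ordt" where
  "ord_type i j = (if i < j then OLess else if i = j then OEq else OGreater)"

datatype side = SU | SV   (* playing on u / on v *)
datatype pebble = PX | PY

(* configuration (i1, i2, j1, j2): x on i1 in u and j1 in v, y on i2 in u and j2 in v *)
type_synonym config = "nat \<times> nat \<times> nat \<times> nat"

definition piso :: "'a list \<Rightarrow> 'a list \<Rightarrow> config \<Rightarrow> bool" where
  "piso u v c = (case c of (i1, i2, j1, j2) \<Rightarrow>
      letter u i1 = letter v j1 \<and> letter u i2 = letter v j2 \<and>
      ord_type i1 i2 = ord_type j1 j2)"

(* Samson places pebble z on position p of the word given by s; Delilah answers
   with the mate at position q in the other word. *)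
definition move :: "side \<Rightarrow> pebble \<Rightarrow> nat \<Rightarrow> nat \<Rightarrow> config \<Rightarrow> config" where
  "move s z p q c = (case c of (i1, i2, j1, j2) \<Rightarrow>
     (case (s, z) of
        (SU, PX) \<Rightarrow> (p, i2, q, j2)
      | (SU, PY) \<Rightarrow> (i1, p, j1, q)
      | (SV, PX) \<Rightarrow> (q, i2, p, j2)
      | (SV, PY) \<Rightarrow> (i1, q, j1, p)))"

definition word_of :: "'a list \<Rightarrow> 'a list \<Rightarrow> side \<Rightarrow> 'a list" where
  "word_of u v s = (case s of SU \<Rightarrow> u | SV \<Rightarrow> v)"

definition other :: "side \<Rightarrow> side" where
  "other s = (case s of SU \<Rightarrow> SV | SV \<Rightarrow> SU)"

(* playing on side s is allowed given the remaining number of word changes sw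
   and the side of the previous move (None before the first move) *)
definition can_play :: "nat \<Rightarrow> side option \<Rightarrow> side \<Rightarrow> bool" where
  "can_play sw prev s \<longleftrightarrow> prev = None \<or> prev = Some s \<or> 0 < sw"

definition new_sw :: "nat \<Rightarrow> side option \<Rightarrow> side \<Rightarrow> nat" where
  "new_sw sw prev s = (if prev = None \<or> prev = Some s then sw else sw - 1)"

(* win u v k sw prev c: Samson has a winning strategy when k rounds remain,
   he may still change the word at most sw times, and prev is the word of his
   previous move. *)
fun win :: "'a list \<Rightarrow> 'a list \<Rightarrow> nat \<Rightarrow> nat \<Rightarrow> side option \<Rightarrow> config \<Rightarrow> bool" where
  "win u v 0 sw prev c = (\<not> piso u v c)"
| "win u v (Suc k) sw prev c =
     (\<not> piso u v c \<or>
      (\<exists>s z p. can_play sw prev s \<and> p \<in> {1..length (word_of u v s)} \<and>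
         (\<forall>q \<in> {1..length (word_of u v (other s))}.
             win u v k (new_sw sw prev s) (Some s) (move s z p q c))))"

definition samson_wins :: "nat \<Rightarrow> nat \<Rightarrow> 'a list \<Rightarrow> nat \<Rightarrow> nat \<Rightarrow> 'a list \<Rightarrow> nat \<Rightarrow> nat \<Rightarrow> bool" where
  "samson_wins m n u i1 i2 v j1 j2 = win u v n (m - 1) None (i1, i2, j1, j2)"

(* Samson has a winning strategy in FO^2_{m,n}((u,i1,i2),(v,j1,j2)) whose first
   move is on the word given by s (if the initial configuration already is not a
   partial isomorphism, he has won before moving). *)
definition samson_wins_first :: "side \<Rightarrow> nat \<Rightarrow> nat \<Rightarrow> 'a list \<Rightarrow> nat \<Rightarrow> nat \<Rightarrow> 'a list \<Rightarrow> nat \<Rightarrow> nat \<Rightarrow> bool" where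
  "samson_wins_first s m n u i1 i2 v j1 j2 =
     (\<not> piso u v (i1, i2, j1, j2) \<or>
      (\<exists>k. n = Suc k \<and>
        (\<exists>z p. p \<in> {1..length (word_of u v s)} \<and>
          (\<forall>q \<in> {1..length (word_of u v (other s))}.
             win u v k (m - 1) (Some s) (move s z p q (i1, i2, j1, j2))))))"

end

theory Submission
  imports Defs
begin

text \<open>Let \<open>r\<close> end with the boundary position \<open>(d, a)\<close>, and let
  \<open>r(u)\<close>, \<open>r(v)\<close> lie differently with respect to the \<open>x\<close>-pebbles. Samson puts the \<open>y\<close>-pebble on
  \<open>r(u)\<close> or on \<open>r(v)\<close>, the word being dictated by \<open>d\<close> and the order types. An answer of Delilah
  that keeps the partial isomorphism carries the letter \<open>a\<close> and lies on the wrong side of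
  \<open>r(v)\<close> resp. \<open>r(u)\<close>; as these are the next occurrences of \<open>a\<close> after the positions of the prefix
  \<open>r'\<close> of \<open>r\<close>, the prefix distinguishes the two \<open>y\<close>-pebbles in the same way. Samson continues
  with \<open>r'\<close> and the roles of the pebble pairs exchanged, changing the word exactly where \<open>r\<close>
  changes direction, so \<open>m\<close> blocks cost \<open>m - 1\<close> changes.\<close>

lemma bpos_step_RtD:
  assumes "bpos_step (Rt, a) w q = Some x"
  shows "q < x \<and> x \<le> length w \<and> letter w x = a \<and>
    (\<forall>y. q < y \<and> y \<le> length w \<and> letter w y = a \<longrightarrow> x \<le> y)"
proof -
  let ?S = "{i \<in> {q+1..length w}. letter w i = a}"
  have "?S \<noteq> {}" and x: "x = Min ?S"
    using assms by (auto simp: bpos_step_def split: if_splits)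
  then have "x \<in> ?S" using Min_in[of ?S] by simp
  with x show ?thesis by auto
qed

lemma bpos_step_LtD:
  assumes "bpos_step (Lt, a) w q = Some x"
  shows "1 \<le> x \<and> x < q \<and> letter w x = a \<and>
    (\<forall>y. 1 \<le> y \<and> y < q \<and> letter w y = a \<longrightarrow> y \<le> x)"
proof -
  let ?S = "{i \<in> {1..q-1}. letter w i = a}"
  have "?S \<noteq> {}" and x: "x = Max ?S"
    using assms by (auto simp: bpos_step_def split: if_splits)
  then have "x \<in> ?S" using Max_in[of ?S] by simp
  with x show ?thesis by auto
qed

lemma bpos_step_letter: "bpos_step (d, a) w q = Some x \<Longrightarrow> letter w x = a"
  by (cases d) (auto dest: bpos_step_RtD bpos_step_LtD)

text \<open>The virtual position just outside the word, from which the first step in direction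
  \<open>d\<close> is taken.\<close>

definition start_pos :: "dir \<Rightarrow> 'a list \<Rightarrow> nat" where
  "start_pos d w = (case d of Rt \<Rightarrow> 0 | Lt \<Rightarrow> Suc (length w))"

lemma bpos_first_eq_bpos_step: "bpos_first (d, a) w = bpos_step (d, a) w (start_pos d w)"
  by (cases d) (auto simp: bpos_first_def bpos_step_def start_pos_def)

lemma bpos_step_range:
  assumes "bpos_step p w q = Some x" "q \<le> Suc (length w)"
  shows "x \<in> {1..length w}"
  using assms bpos_step_RtD[of "snd p" w q x] bpos_step_LtD[of "snd p" w q x]
  by (cases p; cases "fst p") auto

lemma ranker_eval_singleton: "ranker_eval [(d, a)] w = bpos_step (d, a) w (start_pos d w)"
  by (simp add: bpos_first_eq_bpos_step split: option.split)

lemma ranker_from_snoc: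
  "ranker_from (ps @ [p]) w q = Option.bind (ranker_from ps w q) (bpos_step p w)"
  by (induction ps arbitrary: q) (auto split: option.split)

lemma ranker_eval_snoc:
  "r \<noteq> [] \<Longrightarrow> ranker_eval (r @ [p]) w = Option.bind (ranker_eval r w) (bpos_step p w)"
  by (cases r) (auto simp: ranker_from_snoc split: option.split)

lemma ranker_eval_range: "ranker_eval r w = Some x \<Longrightarrow> x \<in> {1..length w}"
proof (induction r arbitrary: x rule: rev_induct)
  case Nil
  then show ?case by simp
next
  case (snoc p r)
  show ?case
  proof (cases "r = []")
    case True
    obtain d a where "p = (d, a)" by fastforce
    with True snoc.prems have "bpos_step p w (start_pos d w) = Some x"
      by (metis append_Nil ranker_eval_singleton)
    then show ?thesis by (rule bpos_step_range) (simp add: start_pos_def split: dir.split)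
  next
    case False
    with snoc.prems obtain q where "ranker_eval r w = Some q" "bpos_step p w q = Some x"
      by (auto simp: ranker_eval_snoc bind_eq_Some_conv)
    with snoc.IH show ?thesis using bpos_step_range by fastforce
  qed
qed

lemma num_blocks_snoc:
  assumes "r \<noteq> []"
  shows "num_blocks (r @ [p]) = num_blocks r + (if ends_with r = fst p then 0 else 1)"
proof -
  let ?S = "\<lambda>r::'a bpos list. {i. Suc i < length r \<and> fst (r ! i) \<noteq> fst (r ! Suc i)}"
  have "i \<in> ?S (r @ [p]) \<longleftrightarrow> i \<in> ?S r \<union> (if ends_with r = fst p then {} else {length r - 1})"
    for i
  proof -
    consider "Suc i < length r" | "i = length r - 1" | "length r < Suc i" by linarith
    then show ?thesis
      using assms by cases (auto simp: nth_append ends_with_def last_conv_nth)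
  qed
  then have "?S (r @ [p]) = ?S r \<union> (if ends_with r = fst p then {} else {length r - 1})"
    by blast
  moreover have "finite (?S r)"
    by (rule finite_subset[of _ "{..<length r}"]) auto
  moreover have "length r - 1 \<notin> ?S r" using assms by auto
  ultimately show ?thesis using assms by (simp add: num_blocks_def)
qed

text \<open>The theorem's condition for a strategy opening on word \<open>s\<close>, where \<open>r\<close> ends with \<open>d\<close>,
  \<open>ru = r(u)\<close> and \<open>rv = r(v)\<close>.\<close>

definition opening_side :: "side \<Rightarrow> dir \<Rightarrow> nat \<Rightarrow> nat \<Rightarrow> nat \<Rightarrow> nat \<Rightarrow> bool" where
  "opening_side s d ru i rv j = (case (s, d) of
      (SU, Rt) \<Rightarrow> ru \<le> i \<and> j \<le> rv
    | (SU, Lt) \<Rightarrow> i \<le> ru \<and> rv \<le> j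
    | (SV, Rt) \<Rightarrow> i \<le> ru \<and> rv \<le> j
    | (SV, Lt) \<Rightarrow> ru \<le> i \<and> j \<le> rv)"

lemma opening_side_SV: "opening_side SV d ru i rv j = opening_side SU d rv j ru i"
  by (cases d) (auto simp: opening_side_def)

lemma opening_side_other:
  "d' \<noteq> d \<Longrightarrow> opening_side (other s) d' ru i rv j = opening_side s d ru i rv j"
  by (cases d; cases d'; cases s) (auto simp: opening_side_def other_def)

lemma opening_side_exists:
  "ord_type ru i \<noteq> ord_type rv j \<Longrightarrow> opening_side SU d ru i rv j \<or> opening_side SV d ru i rv j"
  by (cases d) (auto simp: opening_side_def ord_type_def split: if_splits)

lemma not_opening_side_start_pos:
  "yu \<in> {1..length u} \<Longrightarrow> yv \<in> {1..length v} \<Longrightarrow>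
    \<not> opening_side s d (start_pos d u) yu (start_pos d v) yv"
  by (cases d; cases s) (auto simp: opening_side_def start_pos_def)

text \<open>Samson has put a pebble on \<open>r\<close>, the next \<open>a\<close> after \<open>q\<close>; Delilah's answer \<open>y\<close>
  carries the letter \<open>a\<close> and, by the hypothesis on \<open>i\<close> and \<open>j\<close>, lies strictly before
  \<open>r'\<close> in direction \<open>d\<close>. Since \<open>r'\<close> is the next \<open>a\<close> after \<open>q'\<close>, \<open>y\<close> cannot lie beyond
  \<open>q'\<close>, so the predecessors \<open>q, q'\<close> distinguish \<open>r\<close> from \<open>y\<close>.\<close>

lemma answer_distinguished_by_predecessor:
  assumes step: "bpos_step (d, a) w q = Some r" and step': "bpos_step (d, a) w' q' = Some r'"
    and "ord_type r i \<noteq> ord_type r' j" "opening_side SU d r i r' j"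
    and "y \<in> {1..length w'}" "letter w' y = a" "ord_type i r = ord_type j y"
  shows "ord_type q r \<noteq> ord_type q' y \<and> opening_side SU d q r q' y"
proof (cases d)
  case Rt
  have "y < r'" using assms Rt by (auto simp: opening_side_def ord_type_def split: if_splits)
  then have "y \<le> q'" using bpos_step_RtD[OF step'[unfolded Rt]] assms(5,6)
    by (metis atLeastAtMost_iff leD le_less_linear)
  moreover have "q < r" using bpos_step_RtD[OF step[unfolded Rt]] by simp
  ultimately show ?thesis using Rt by (simp add: opening_side_def ord_type_def)
next
  case Lt
  have "r' < y" using assms Lt by (auto simp: opening_side_def ord_type_def split: if_splits)
  then have "q' \<le> y" using bpos_step_LtD[OF step'[unfolded Lt]] assms(5,6)
    by (metis atLeastAtMost_iff leD le_less_linear)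
  moreover have "r < q" using bpos_step_LtD[OF step[unfolded Lt]] by simp
  ultimately show ?thesis using Lt by (simp add: opening_side_def ord_type_def)
qed

definition swap_pebbles :: "config \<Rightarrow> config" where
  "swap_pebbles c = (case c of (i1, i2, j1, j2) \<Rightarrow> (i2, i1, j2, j1))"

lemma piso_swap_pebbles: "piso u v (swap_pebbles c) = piso u v c"
  by (cases c) (auto simp: piso_def swap_pebbles_def ord_type_def)

lemma move_swap_pebbles: "\<exists>z'. \<forall>q. move s z p q (swap_pebbles c) = swap_pebbles (move s z' p q c)"
proof -
  have "move s z p q (swap_pebbles c) =
      swap_pebbles (move s (case z of PX \<Rightarrow> PY | PY \<Rightarrow> PX) p q c)" for q
    by (cases c; cases s; cases z) (auto simp: move_def swap_pebbles_def)
  then show ?thesis by blast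
qed

lemma win_swap_pebbles: "win u v k sw prev (swap_pebbles c) \<Longrightarrow> win u v k sw prev c"
proof (induction k arbitrary: sw prev c)
  case 0
  then show ?case by (simp add: piso_swap_pebbles)
next
  case (Suc k)
  show ?case
  proof (cases "piso u v c")
    case True
    with Suc.prems obtain s z p where "can_play sw prev s" "p \<in> {1..length (word_of u v s)}"
      "\<forall>q \<in> {1..length (word_of u v (other s))}.
        win u v k (new_sw sw prev s) (Some s) (move s z p q (swap_pebbles c))"
      by (auto simp: piso_swap_pebbles)
    moreover obtain z' where "\<forall>q. move s z p q (swap_pebbles c) = swap_pebbles (move s z' p q c)"
      using move_swap_pebbles by blast
    ultimately show ?thesis using Suc.IH by (simp only: win.simps) metis
  qed simp
qed

lemma win_if_not_piso: "\<not> piso u v c \<Longrightarrow> win u v k sw prev c"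
  by (cases k) auto

lemma samson_wins_if_first: "samson_wins_first s m n u i1 i2 v j1 j2 \<Longrightarrow> samson_wins m n u i1 i2 v j1 j2"
  unfolding samson_wins_first_def samson_wins_def
  by (auto simp: can_play_def new_sw_def win_if_not_piso) blast

lemma win_if_samson_wins_first_swapped:
  assumes first: "samson_wins_first s' m' n u i2 i1 v j2 j1" and "1 \<le> m'"
    and m: "m = (if s' = s then m' else Suc m')"
  shows "win u v n (m - 1) (Some s) (i1, i2, j1, j2)"
proof -
  have swap: "(i2, i1, j2, j1) = swap_pebbles (i1, i2, j1, j2)" by (simp add: swap_pebbles_def)
  have "win u v n (m - 1) (Some s) (i2, i1, j2, j1)"
  proof (cases "piso u v (i2, i1, j2, j1)")
    case True
    with first obtain k z p where "n = Suc k" "p \<in> {1..length (word_of u v s')}"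
      "\<forall>q \<in> {1..length (word_of u v (other s'))}.
        win u v k (m' - 1) (Some s') (move s' z p q (i2, i1, j2, j1))"
      by (auto simp: samson_wins_first_def)
    moreover have "can_play (m - 1) (Some s) s'" "new_sw (m - 1) (Some s) s' = m' - 1"
      using \<open>1 \<le> m'\<close> m by (auto simp: can_play_def new_sw_def)
    ultimately show ?thesis by (auto intro!: exI[of _ s']) blast
  qed (rule win_if_not_piso)
  then show ?thesis unfolding swap by (rule win_swap_pebbles)
qed

lemma samson_wins_first_at_ranker_step:
  assumes U: "bpos_step (d, a) u qu = Some ru" and V: "bpos_step (d, a) v qv = Some rv"
    and ru: "ru \<in> {1..length u}" and rv: "rv \<in> {1..length v}"
    and distinct: "ord_type ru i1 \<noteq> ord_type rv j1" and side: "opening_side s d ru i1 rv j1"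
    and continue: "\<And>yu yv. yu \<in> {1..length u} \<Longrightarrow> yv \<in> {1..length v} \<Longrightarrow>
      ord_type qu yu \<noteq> ord_type qv yv \<Longrightarrow> opening_side s d qu yu qv yv \<Longrightarrow>
      win u v k (m - 1) (Some s) (i1, yu, j1, yv)"
  shows "samson_wins_first s m (Suc k) u i1 i2 v j1 j2"
proof (cases s)
  case SU
  have "win u v k (m - 1) (Some SU) (i1, ru, j1, q)" if q: "q \<in> {1..length v}" for q
  proof (cases "piso u v (i1, ru, j1, q)")
    case True
    then have "letter v q = a" "ord_type i1 ru = ord_type j1 q"
      using bpos_step_letter[OF U] by (auto simp: piso_def)
    with answer_distinguished_by_predecessor[OF U V distinct] side SU q
    show ?thesis using continue ru q SU by blast
  qed (rule win_if_not_piso)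
  then show ?thesis
    using ru SU by (auto simp: samson_wins_first_def word_of_def other_def move_def intro!: exI[of _ PY])
next
  case SV
  have "win u v k (m - 1) (Some SV) (i1, q, j1, rv)" if q: "q \<in> {1..length u}" for q
  proof (cases "piso u v (i1, q, j1, rv)")
    case True
    then have "letter u q = a" "ord_type j1 rv = ord_type i1 q"
      using bpos_step_letter[OF V] by (auto simp: piso_def)
    with answer_distinguished_by_predecessor[OF V U] distinct side SV q
    show ?thesis using continue rv q SV by (metis opening_side_SV)
  qed (rule win_if_not_piso)
  then show ?thesis
    using rv SV by (auto simp: samson_wins_first_def word_of_def other_def move_def intro!: exI[of _ PY])
qed

lemma ranker_samson_wins_first:
  assumes "r \<noteq> []" "ranker_eval r u = Some ru" "ranker_eval r v = Some rv"
    "ord_type ru i1 \<noteq> ord_type rv j1" "opening_side s (ends_with r) ru i1 rv j1"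
  shows "samson_wins_first s (num_blocks r) (length r) u i1 i2 v j1 j2"
  using assms
proof (induction r arbitrary: ru rv i1 i2 j1 j2 s rule: rev_nonempty_induct)
  case (single p)
  obtain d a where p: "p = (d, a)" by fastforce
  show ?case
  proof (simp only: length_Cons list.size, rule samson_wins_first_at_ranker_step)
    show "bpos_step (d, a) u (start_pos d u) = Some ru" "bpos_step (d, a) v (start_pos d v) = Some rv"
      using single.prems(1,2) by (simp_all only: p ranker_eval_singleton)
    show "ru \<in> {1..length u}" "rv \<in> {1..length v}"
      using single.prems(1,2) by (simp_all only: ranker_eval_range)
    show "opening_side s d ru i1 rv j1" using single.prems(4) by (simp add: p ends_with_def)
    show "ord_type ru i1 \<noteq> ord_type rv j1" by (fact single.prems(3))
  qed (use not_opening_side_start_pos in blast)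
next
  case (snoc p r)
  obtain d a where p: "p = (d, a)" by fastforce
  obtain qu qv where qu: "ranker_eval r u = Some qu" "bpos_step (d, a) u qu = Some ru"
    and qv: "ranker_eval r v = Some qv" "bpos_step (d, a) v qv = Some rv"
    using snoc.prems(1,2) by (auto simp: p ranker_eval_snoc[OF snoc.hyps] bind_eq_Some_conv)
  show ?case
  proof (simp only: length_append_singleton, rule samson_wins_first_at_ranker_step[OF qu(2) qv(2)])
    show "ru \<in> {1..length u}" "rv \<in> {1..length v}"
      using snoc.prems(1,2) by (simp_all only: ranker_eval_range)
    show "opening_side s d ru i1 rv j1" using snoc.prems(4) by (simp add: p ends_with_def)
    fix yu yv
    assume "ord_type qu yu \<noteq> ord_type qv yv" "opening_side s d qu yu qv yv"
    define s' where "s' = (if ends_with r = d then s else other s)"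
    have "opening_side s' (ends_with r) qu yu qv yv"
      using \<open>opening_side s d qu yu qv yv\<close> opening_side_other by (simp add: s'_def)
    with snoc.IH qu(1) qv(1) \<open>ord_type qu yu \<noteq> ord_type qv yv\<close>
    have "samson_wins_first s' (num_blocks r) (length r) u yu i1 v yv j1" by blast
    moreover have "1 \<le> num_blocks r" using snoc.hyps by (simp add: num_blocks_def)
    moreover have "num_blocks (r @ [p]) = (if s' = s then num_blocks r else Suc (num_blocks r))"
      using num_blocks_snoc[OF snoc.hyps, of p] by (cases s) (auto simp: s'_def p other_def)
    ultimately show "win u v (length r) (num_blocks (r @ [p]) - 1) (Some s) (i1, yu, j1, yv)"
      by (rule win_if_samson_wins_first_swapped)
  qed (use snoc.prems(3) in simp)
qed

theorem lemma4p2: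
  fixes u v :: "'a::finite list" and r :: "'a bpos list"
    and m n i1 i2 j1 j2 :: nat
  assumes "1 \<le> m" and "m \<le> n"
    and "r \<in> R_mn m n u \<inter> R_mn m n v"
    and "i1 \<in> {1..length u}" and "i2 \<in> {1..length u}"
    and "j1 \<in> {1..length v}" and "j2 \<in> {1..length v}"
    and "ord_type (the (ranker_eval r u)) i1 \<noteq> ord_type (the (ranker_eval r v)) j1"
  shows "samson_wins m n u i1 i2 v j1 j2
    \<and> ((ends_with r = Rt \<and> the (ranker_eval r u) \<le> i1 \<and> the (ranker_eval r v) \<ge> j1) \<or>
        (ends_with r = Lt \<and> the (ranker_eval r u) \<ge> i1 \<and> the (ranker_eval r v) \<le> j1)
        \<longrightarrow> samson_wins_first SU m n u i1 i2 v j1 j2)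
    \<and> ((ends_with r = Rt \<and> the (ranker_eval r u) \<ge> i1 \<and> the (ranker_eval r v) \<le> j1) \<or>
        (ends_with r = Lt \<and> the (ranker_eval r u) \<le> i1 \<and> the (ranker_eval r v) \<ge> j1)
        \<longrightarrow> samson_wins_first SV m n u i1 i2 v j1 j2)"
proof -
  obtain ru rv where ru: "ranker_eval r u = Some ru" and rv: "ranker_eval r v = Some rv"
    using assms(3) by (auto simp: R_mn_def)
  have r: "length r = n" "num_blocks r = m" "r \<noteq> []"
    using assms(1-3) by (auto simp: R_mn_def is_mn_ranker_def)
  have distinct: "ord_type ru i1 \<noteq> ord_type rv j1" using assms(8) ru rv by simp
  have first: "samson_wins_first s m n u i1 i2 v j1 j2"
    if "opening_side s (ends_with r) ru i1 rv j1" for s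
    using ranker_samson_wins_first[OF r(3) ru rv distinct that] r by simp
  have "samson_wins m n u i1 i2 v j1 j2"
    using opening_side_exists[OF distinct] first samson_wins_if_first by blast
  with first[of SU] first[of SV] ru rv show ?thesis
    by (cases "ends_with r") (auto simp: opening_side_def)
qed

end
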